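(* For every $m\in\mathbb N_+$, $k\ge1$, $\xi\in\mathbb R^d$ and every configuration $\mathbf a$, $$\sum_{F\subset E_d(\square_m),|F|=k}D_F\mathscr E_{m,\xi}(\mathbf a)=\frac1{|\square_m|}\Big\langle\nabla\ell_\xi,\ \mathbf a\sum_{F\subset E_d(\square_m),|F|=k}(D_F\nabla v_{m,\xi})(\mathbf a)\Big\rangle_{\square_m}+\frac1{|\square_m|}\sum_{e\in E_d(\square_m)}\Big\langle\nabla\ell_\xi,\ (\mathbf a^e-\mathbf a)\sum_{G\subset E_d(\square_m),|G|=k-1}(D_G\nabla v_{m,\xi})(\mathbf a^e)\Big\rangle_{\square_m}.$$
   Context: Bond configurations $\mathbf a\in\{0,1\}^{E_d}$ on $\mathbb Z^d$. $E_d(U)$: nearest-neighbour edges with both endpoints in $U$; $\partial U=\{x\in U:\exists y\sim x, y\notin U\}$, $\mathrm{int}(U)=U\setminus\partial U$; $\square_m=\mathbb Z^d\cap(-3^m/2,3^m/2)^d$; $\ell_\xi(x)=\xi\cdot x$. For $u:\mathbb Z^d\to\mathbb R$, $\nabla u(x,y)=u(y)-u(x)$ on oriented edges; $\nabla\cdot(\mathbf a\nabla u)(x)=\sum_{z\sim x}\mathbf a(\{x,z\})(u(z)-u(x))$; for vector fields, $\langle F,G\rangle_V=\sum_{e\in E_d(V)}F(e)G(e)$, and $(\mathbf b F)(e)=\mathbf b(e)F(e)$. $\mathscr E_{m,\xi}(\mathbf a)=\inf_{v\in\ell_\xi+C_0(\square_m)}|\square_m|^{-1}\sum_{e\in E_d(\square_m)}\mathbf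 a(e)|\nabla v(e)|^2$, with $C_0(U)$ the functions vanishing on $\partial U$. For each configuration $\mathbf b$, $v_{m,\xi}(\mathbf b)$ is a fixed function on $\square_m$ with $v_{m,\xi}(\mathbf b)=\ell_\xi$ on $\partial\square_m$ and $-\nabla\cdot(\mathbf b\nabla v_{m,\xi}(\mathbf b))=0$ at every $x\in\mathrm{int}(\square_m)$ (such a function exists: harmonic on clusters connected to $\partial\square_m$, constant on the other clusters; it attains the infimum in $\mathscr E_{m,\xi}(\mathbf b)$). $\mathbf a^G(e)=\mathbf 1_{e\in G}+\mathbf a(e)\mathbf 1_{e\notin G}$, $\mathbf a^e=\mathbf a^{\{e\}}$; $D_Gf(\mathbf a)=\sum_{G'\subset G}(-1)^{|G\setminus G'|}f(\mathbf a^{G'})$, and $(D_Gf)(\mathbf a^e)$ means $D_Gf$ evaluated at the configuration $\mathbf a^e$. *)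

theory Defs
  imports "HOL-Analysis.Analysis"
begin

text \<open>A nearest-neighbour edge
 {x, x + e_i} is represented canonically by the oriented pair (x, x + e_i).
 A bond configuration assigns a value in {0,1} (here: bool) to each edge.\<close>

type_synonym ('d) pt = "int ^ ('d::finite)"
type_synonym 'd edge = "'d pt \<times> 'd pt"
type_synonym 'd conf = "('d::finite) edge \<Rightarrow> bool"

definition is_edge :: "('d::finite) edge \<Rightarrow> bool" where
  "is_edge e \<longleftrightarrow> (\<exists>i. snd e = fst e + axis i 1)"

definition adj :: "('d::finite) pt \<Rightarrow> 'd pt \<Rightarrow> bool" where
  "adj x y \<longleftrightarrow> (\<exists>i. y = x + axis i 1 \<or> x = y + axis i 1)"

definition edges_in :: "('d::finite) pt set \<Rightarrow> 'd edge set" where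
  "edges_in U = {e. is_edge e \<and> fst e \<in> U \<and> snd e \<in> U}"

definition bdry :: "('d::finite) pt set \<Rightarrow> 'd pt set" where
  "bdry U = {x \<in> U. \<exists>y. adj x y \<and> y \<notin> U}"

definition intr :: "('d::finite) pt set \<Rightarrow> 'd pt set" where
  "intr U = U - bdry U"

definition cube :: "nat \<Rightarrow> ('d::finite) pt set" where
  "cube m = {x. \<forall>i. \<bar>real_of_int (x $ i)\<bar> < 3 ^ m / 2}"

definition lin :: "real ^ ('d::finite) \<Rightarrow> 'd pt \<Rightarrow> real" where
  "lin \<xi> x = (\<Sum>i\<in>UNIV. \<xi> $ i * real_of_int (x $ i))"

definition grad :: "(('d::finite) pt \<Rightarrow> real) \<Rightarrow> 'd edge \<Rightarrow> real" where
  "grad u e = u (snd e) - u (fst e)"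

definition divag :: "('d::finite) conf \<Rightarrow> ('d pt \<Rightarrow> real) \<Rightarrow> 'd pt \<Rightarrow> real" where
  "divag a u x = (\<Sum>i\<in>UNIV.
      of_bool (a (x, x + axis i 1)) * (u (x + axis i 1) - u x)
    + of_bool (a (x - axis i 1, x)) * (u (x - axis i 1) - u x))"

definition inner_on :: "('d::finite) pt set \<Rightarrow> ('d edge \<Rightarrow> real) \<Rightarrow> ('d edge \<Rightarrow> real) \<Rightarrow> real" where
  "inner_on V F G = (\<Sum>e\<in>edges_in V. F e * G e)"

definition energy :: "nat \<Rightarrow> real ^ ('d::finite) \<Rightarrow> 'd conf \<Rightarrow> real" where
  "energy m \<xi> a = Inf {(1 / real (card (cube m :: 'd pt set))) *
        (\<Sum>e\<in>edges_in (cube m). of_bool (a e) * (grad v e)\<^sup>2) | v.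
        \<forall>x\<in>bdry (cube m). v x = lin \<xi> x}"

definition conf_upd :: "('d::finite) edge set \<Rightarrow> 'd conf \<Rightarrow> 'd conf" where
  "conf_upd G a = (\<lambda>e. e \<in> G \<or> a e)"

definition Dop :: "('d::finite) edge set \<Rightarrow> ('d conf \<Rightarrow> real) \<Rightarrow> 'd conf \<Rightarrow> real" where
  "Dop G f a = (\<Sum>G'\<in>Pow G. (-1) ^ card (G - G') * f (conf_upd G' a))"

end

theory Submission
  imports Defs
begin

text \<open>Since v b is harmonic with boundary values lin \<xi>, it minimises the Dirichlet
  energy, and summation by parts turns that energy into the cross term
  \<open>\<Sum>e. b e * grad (lin \<xi>) e * grad (v b) e\<close>: a sum of products of the bond
  variable b e with a function of b.  D_F obeys a discrete Leibniz rule on such products: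
  either all of F acts on the second factor, or one edge e \<in> F opens the bond e and the
  other k - 1 edges act on the second factor at the configuration with e open.  Summed over
  all k-sets F, the second kind of term becomes a sum over edges e and (k - 1)-sets G.\<close>

lemma finite_vector:
  assumes "\<And>i. finite (B i)"
  shows "finite {x :: 'a ^ 'n::finite. \<forall>i. x $ i \<in> B i}"
proof (rule finite_imageD)
  show "finite (vec_nth ` {x :: 'a ^ 'n. \<forall>i. x $ i \<in> B i})"
    by (rule finite_subset[of _ "PiE UNIV B"]) (use assms in \<open>auto intro: finite_PiE\<close>)
  show "inj_on vec_nth {x :: 'a ^ 'n. \<forall>i. x $ i \<in> B i}"
    by (auto simp: inj_on_def vec_eq_iff)
qed

lemma finite_cube: "finite (cube m :: ('d::finite) pt set)"
proof (rule finite_subset)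
  show "(cube m :: 'd pt set) \<subseteq> {x. \<forall>i. x $ i \<in> {- (3 ^ m) .. 3 ^ m}}"
  proof safe
    fix x :: "'d pt" and i
    assume "x \<in> cube m"
    then have "\<bar>real_of_int (x $ i)\<bar> < 3 ^ m / 2" by (simp add: cube_def)
    then have "real_of_int \<bar>x $ i\<bar> < real_of_int (3 ^ m)" by simp
    then have "\<bar>x $ i\<bar> \<le> 3 ^ m" by linarith
    then show "x $ i \<in> {- (3 ^ m) .. 3 ^ m}" by auto
  qed
qed (rule finite_vector, simp)

lemma finite_edges_in: "finite Q \<Longrightarrow> finite (edges_in Q)"
  by (rule finite_subset[of _ "Q \<times> Q"]) (auto simp: edges_in_def)

lemma edges_in_ending_at:
  assumes "z \<in> intr Q"
  shows "{e \<in> edges_in Q. snd e = z} = range (\<lambda>i. (z - axis i 1, z))"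
proof -
  have "z \<in> Q" and "\<And>y. adj z y \<Longrightarrow> y \<in> Q"
    using assms by (auto simp: intr_def bdry_def)
  moreover have "adj z (z - axis i 1)" for i by (auto simp: adj_def)
  ultimately show ?thesis
    by (force simp: edges_in_def is_edge_def algebra_simps)
qed

lemma edges_in_starting_at:
  assumes "z \<in> intr Q"
  shows "{e \<in> edges_in Q. fst e = z} = range (\<lambda>i. (z, z + axis i 1))"
proof -
  have "z \<in> Q" and "\<And>y. adj z y \<Longrightarrow> y \<in> Q"
    using assms by (auto simp: intr_def bdry_def)
  moreover have "adj z (z + axis i 1)" for i by (auto simp: adj_def)
  ultimately show ?thesis
    by (force simp: edges_in_def is_edge_def algebra_simps)
qed

lemma sum_edges_ending_at:
  assumes "z \<in> intr Q"
  shows "(\<Sum>e\<in>{e \<in> edges_in Q. snd e = z}. h e) = (\<Sum>i\<in>UNIV. h (z - axis i 1, z))"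
  unfolding edges_in_ending_at[OF assms]
  by (subst sum.reindex) (auto simp: inj_def axis_eq_axis)

lemma sum_edges_starting_at:
  assumes "z \<in> intr Q"
  shows "(\<Sum>e\<in>{e \<in> edges_in Q. fst e = z}. h e) = (\<Sum>i\<in>UNIV. h (z, z + axis i 1))"
  unfolding edges_in_starting_at[OF assms]
  by (subst sum.reindex) (auto simp: inj_def axis_eq_axis)

lemma sum_edges_group_by_endpoint:
  fixes w \<phi> :: "_ \<Rightarrow> real"
  assumes "finite Q" and "\<forall>x\<in>bdry Q. \<phi> x = 0" and "\<And>e. e \<in> edges_in Q \<Longrightarrow> p e \<in> Q"
  shows "(\<Sum>e\<in>edges_in Q. w e * \<phi> (p e))
       = (\<Sum>z\<in>intr Q. \<phi> z * (\<Sum>e\<in>{e \<in> edges_in Q. p e = z}. w e))"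
proof -
  have "(\<Sum>e\<in>edges_in Q. w e * \<phi> (p e))
      = (\<Sum>z\<in>Q. \<Sum>e\<in>{e \<in> edges_in Q. p e = z}. w e * \<phi> (p e))"
    by (rule sum.group[symmetric]) (use assms finite_edges_in in auto)
  also have "\<dots> = (\<Sum>z\<in>Q. \<phi> z * (\<Sum>e\<in>{e \<in> edges_in Q. p e = z}. w e))"
    by (auto simp: sum_distrib_left mult.commute intro!: sum.cong)
  also have "\<dots> = (\<Sum>z\<in>intr Q. \<phi> z * (\<Sum>e\<in>{e \<in> edges_in Q. p e = z}. w e))"
    by (rule sum.mono_neutral_right) (use assms in \<open>auto simp: intr_def\<close>)
  finally show ?thesis .
qed

lemma summation_by_parts:
  assumes "finite Q" and "\<forall>x\<in>bdry Q. \<phi> x = 0"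
  shows "(\<Sum>e\<in>edges_in Q. of_bool (b e) * grad u e * grad \<phi> e)
       = - (\<Sum>x\<in>intr Q. \<phi> x * divag b u x)"
proof -
  define w where "w e = of_bool (b e) * grad u e" for e
  have flux: "(\<Sum>e\<in>{e \<in> edges_in Q. snd e = z}. w e) - (\<Sum>e\<in>{e \<in> edges_in Q. fst e = z}. w e)
      = - divag b u z" if "z \<in> intr Q" for z
    unfolding sum_edges_ending_at[OF that] sum_edges_starting_at[OF that] divag_def
      sum_subtractf[symmetric] sum_negf[symmetric]
    by (rule sum.cong) (simp_all add: w_def grad_def algebra_simps)
  have "(\<Sum>e\<in>edges_in Q. of_bool (b e) * grad u e * grad \<phi> e)
      = (\<Sum>e\<in>edges_in Q. w e * \<phi> (snd e)) - (\<Sum>e\<in>edges_in Q. w e * \<phi> (fst e))"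
    by (simp add: w_def grad_def sum_subtractf[symmetric] algebra_simps)
  also have "\<dots> = (\<Sum>z\<in>intr Q. \<phi> z * (\<Sum>e\<in>{e \<in> edges_in Q. snd e = z}. w e))
                 - (\<Sum>z\<in>intr Q. \<phi> z * (\<Sum>e\<in>{e \<in> edges_in Q. fst e = z}. w e))"
    using sum_edges_group_by_endpoint[OF assms, of snd] sum_edges_group_by_endpoint[OF assms, of fst]
    by (simp add: edges_in_def)
  also have "\<dots> = - (\<Sum>x\<in>intr Q. \<phi> x * divag b u x)"
    by (simp add: flux right_diff_distrib[symmetric] sum_subtractf[symmetric] sum_negf[symmetric])
  finally show ?thesis .
qed

lemma harmonic_orthogonal:
  assumes "finite Q" and "\<forall>x\<in>bdry Q. \<phi> x = 0" and "\<forall>x\<in>intr Q. divag b u x = 0"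
  shows "(\<Sum>e\<in>edges_in Q. of_bool (b e) * grad u e * grad \<phi> e) = 0"
  using summation_by_parts[OF assms(1,2), of b u] assms(3) by simp

lemma dirichlet_principle:
  assumes "finite Q" and "\<forall>x\<in>bdry Q. w x = u x" and "\<forall>x\<in>intr Q. divag b u x = 0"
  shows "(\<Sum>e\<in>edges_in Q. of_bool (b e) * (grad u e)\<^sup>2)
       \<le> (\<Sum>e\<in>edges_in Q. of_bool (b e) * (grad w e)\<^sup>2)"
proof -
  define \<phi> where "\<phi> x = w x - u x" for x
  have "grad w e = grad u e + grad \<phi> e" for e by (simp add: grad_def \<phi>_def)
  then have "(\<Sum>e\<in>edges_in Q. of_bool (b e) * (grad w e)\<^sup>2)
      = (\<Sum>e\<in>edges_in Q. of_bool (b e) * (grad u e)\<^sup>2)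
        + 2 * (\<Sum>e\<in>edges_in Q. of_bool (b e) * grad u e * grad \<phi> e)
        + (\<Sum>e\<in>edges_in Q. of_bool (b e) * (grad \<phi> e)\<^sup>2)"
    by (simp add: sum.distrib sum_distrib_left power2_eq_square algebra_simps)
  also have "(\<Sum>e\<in>edges_in Q. of_bool (b e) * grad u e * grad \<phi> e) = 0"
    by (rule harmonic_orthogonal) (use assms in \<open>auto simp: \<phi>_def\<close>)
  finally show ?thesis by (simp add: sum_nonneg)
qed

lemma harmonic_energy_eq_cross_term:
  assumes "finite Q" and "\<forall>x\<in>bdry Q. u x = f x" and "\<forall>x\<in>intr Q. divag b u x = 0"
  shows "(\<Sum>e\<in>edges_in Q. of_bool (b e) * (grad u e)\<^sup>2)
       = (\<Sum>e\<in>edges_in Q. of_bool (b e) * (grad f e * grad u e))"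
proof -
  have "(\<Sum>e\<in>edges_in Q. of_bool (b e) * grad u e * grad (\<lambda>x. u x - f x) e) = 0"
    by (rule harmonic_orthogonal) (use assms in auto)
  moreover have "grad (\<lambda>x. u x - f x) e = grad u e - grad f e" for e
    by (simp add: grad_def)
  ultimately show ?thesis
    by (simp add: power2_eq_square right_diff_distrib sum_subtractf algebra_simps)
qed

lemma energy_eq_cross_term:
  assumes "\<forall>x\<in>bdry (cube m). u x = lin \<xi> x" and "\<forall>x\<in>intr (cube m). divag b u x = 0"
  shows "energy m \<xi> b = (1 / real (card (cube m :: ('d::finite) pt set))) *
     (\<Sum>e\<in>edges_in (cube m :: 'd pt set). of_bool (b e) * (grad (lin \<xi>) e * grad u e))"
proof -
  define c where "c = 1 / real (card (cube m :: 'd pt set))"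
  define S where "S w = (\<Sum>e\<in>edges_in (cube m). of_bool (b e) * (grad w e)\<^sup>2)" for w
  have "energy m \<xi> b = c * S u"
    unfolding energy_def c_def[symmetric] S_def[symmetric]
  proof (rule cInf_eq_minimum)
    show "c * S u \<in> {c * S w |w. \<forall>x\<in>bdry (cube m). w x = lin \<xi> x}" using assms(1) by auto
    fix y assume "y \<in> {c * S w |w. \<forall>x\<in>bdry (cube m). w x = lin \<xi> x}"
    then obtain w where "y = c * S w" and "\<forall>x\<in>bdry (cube m). w x = u x" using assms(1) by auto
    with dirichlet_principle[OF finite_cube _ assms(2)] show "c * S u \<le> y"
      by (simp add: S_def c_def divide_right_mono)
  qed
  then show ?thesis
    using harmonic_energy_eq_cross_term[OF finite_cube assms] by (simp add: S_def c_def)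
qed

lemma conf_upd_conf_upd: "conf_upd G (conf_upd H a) = conf_upd (G \<union> H) a"
  by (auto simp: conf_upd_def)

lemma Dop_insert:
  assumes "finite F" and "e \<notin> F"
  shows "Dop (insert e F) f a = Dop F f (conf_upd {e} a) - Dop F f a"
proof -
  have card_insert_diff: "card (insert e F - G) = Suc (card (F - G))" if "G \<subseteq> F" for G
  proof -
    have "insert e F - G = insert e (F - G)" using that assms(2) by auto
    then show ?thesis using assms by simp
  qed
  have "inj_on (insert e) (Pow F)"
    using assms(2) by (auto simp: inj_on_def)
  moreover have "insert e F - insert e G = F - G" if "G \<subseteq> F" for G
    using that assms(2) by auto
  ultimately have subsets_with_e: "(\<Sum>G\<in>insert e ` Pow F. (-1) ^ card (insert e F - G) * f (conf_upd G a))
      = Dop F f (conf_upd {e} a)"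
    by (simp add: sum.reindex Dop_def conf_upd_conf_upd)
  have "Dop (insert e F) f a
      = (\<Sum>G\<in>Pow F. (-1) ^ card (insert e F - G) * f (conf_upd G a))
        + (\<Sum>G\<in>insert e ` Pow F. (-1) ^ card (insert e F - G) * f (conf_upd G a))"
    unfolding Dop_def Pow_insert by (rule sum.union_disjoint) (use assms in auto)
  also have "(\<Sum>G\<in>Pow F. (-1) ^ card (insert e F - G) * f (conf_upd G a)) = - Dop F f a"
    by (simp add: Dop_def card_insert_diff sum_negf[symmetric])
  finally show ?thesis using subsets_with_e by simp
qed

lemma Dop_remove:
  assumes "finite F" and "e \<in> F"
  shows "Dop F f a = Dop (F - {e}) f (conf_upd {e} a) - Dop (F - {e}) f a"
  using Dop_insert[of "F - {e}" e f a] assms by (simp add: insert_absorb)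

lemma Dop_conf_upd_mem:
  assumes "finite F" and "e \<in> F"
  shows "Dop F f (conf_upd {e} a) = 0"
  by (simp add: Dop_remove[OF assms] conf_upd_conf_upd)

lemma Dop_sum: "Dop F (\<lambda>b. \<Sum>e\<in>E. f e b) a = (\<Sum>e\<in>E. Dop F (f e) a)"
  unfolding Dop_def by (simp add: sum_distrib_left) (rule sum.swap)

lemma Dop_cmult: "Dop F (\<lambda>b. c * f b) a = c * Dop F f a"
  unfolding Dop_def by (simp add: sum_distrib_left algebra_simps)

lemma Dop_mult_bond_notin:
  assumes "e \<notin> F"
  shows "Dop F (\<lambda>b. of_bool (b e) * g b) a = of_bool (a e) * Dop F g a"
proof -
  have "conf_upd G a e = a e" if "G \<in> Pow F" for G
    using that assms by (auto simp: conf_upd_def)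
  then show ?thesis
    unfolding Dop_def by (auto simp: sum_distrib_left algebra_simps intro!: sum.cong)
qed

lemma Dop_mult_bond_mem:
  assumes "finite F" and "e \<in> F"
  shows "Dop F (\<lambda>b. of_bool (b e) * g b) a
       = of_bool (a e) * Dop F g a + (1 - of_bool (a e)) * Dop (F - {e}) g (conf_upd {e} a)"
proof -
  have notin: "e \<notin> F - {e}" by simp
  have "Dop (F - {e}) (\<lambda>b. of_bool (b e) * g b) (conf_upd {e} a) = Dop (F - {e}) g (conf_upd {e} a)"
    using Dop_mult_bond_notin[OF notin, of g "conf_upd {e} a"] by (simp add: conf_upd_def)
  moreover have "Dop (F - {e}) (\<lambda>b. of_bool (b e) * g b) a = of_bool (a e) * Dop (F - {e}) g a"
    using Dop_mult_bond_notin[OF notin] .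
  ultimately show ?thesis
    unfolding Dop_remove[OF assms, of "\<lambda>b. of_bool (b e) * g b"] Dop_remove[OF assms, of g]
    by (simp add: algebra_simps)
qed

lemma sum_card_subsets_through:
  fixes X :: "'a set \<Rightarrow> 'b::comm_monoid_add"
  assumes "finite E" and "e \<in> E" and "\<And>G. G \<subseteq> E \<Longrightarrow> e \<in> G \<Longrightarrow> X G = 0"
  shows "(\<Sum>F\<in>{F. F \<subseteq> E \<and> card F = Suc k}. if e \<in> F then X (F - {e}) else 0)
       = (\<Sum>G\<in>{G. G \<subseteq> E \<and> card G = k}. X G)"
proof -
  have fin: "finite F" if "F \<subseteq> E" for F using that assms(1) by (rule finite_subset)
  have "(\<Sum>F\<in>{F. F \<subseteq> E \<and> card F = Suc k}. if e \<in> F then X (F - {e}) else 0)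
      = (\<Sum>F\<in>{F. F \<subseteq> E \<and> card F = Suc k \<and> e \<in> F}. X (F - {e}))"
    using assms(1) by (subst sum.inter_filter[symmetric]) (simp_all add: conj_assoc)
  also have "\<dots> = (\<Sum>G\<in>{G. G \<subseteq> E \<and> card G = k \<and> e \<notin> G}. X G)"
    by (rule sum.reindex_bij_witness[where i = "insert e" and j = "\<lambda>F. F - {e}"])
      (use assms(2) fin in \<open>auto simp: card_Diff_singleton\<close>)
  also have "\<dots> = (\<Sum>G\<in>{G. G \<subseteq> E \<and> card G = k}. X G)"
    by (rule sum.mono_neutral_left) (use assms in auto)
  finally show ?thesis .
qed

lemma sum_conf_upd_single_diff:
  fixes f :: "_ \<Rightarrow> 'a::comm_ring_1"
  assumes "finite E" and "e \<in> E"
  shows "(\<Sum>e'\<in>E. (of_bool (conf_upd {e} a e') - of_bool (a e')) * f e') = (1 - of_bool (a e)) * f e"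
proof -
  have "(of_bool (conf_upd {e} a e') - of_bool (a e')) * f e'
      = (if e' = e then (1 - of_bool (a e)) * f e else 0)" for e'
    by (simp add: conf_upd_def)
  then show ?thesis using assms by simp
qed

lemma sum_Dop_bond_weighted_sum:
  fixes h :: "('d::finite) edge \<Rightarrow> 'd conf \<Rightarrow> real"
  assumes "finite E"
  shows "(\<Sum>F\<in>{F. F \<subseteq> E \<and> card F = Suc k}. Dop F (\<lambda>b. \<Sum>e\<in>E. of_bool (b e) * h e b) a)
       = (\<Sum>e\<in>E. of_bool (a e) * (\<Sum>F\<in>{F. F \<subseteq> E \<and> card F = Suc k}. Dop F (h e) a))
         + (\<Sum>e\<in>E. \<Sum>e'\<in>E. (of_bool (conf_upd {e} a e') - of_bool (a e')) *
              (\<Sum>G\<in>{G. G \<subseteq> E \<and> card G = k}. Dop G (h e') (conf_upd {e} a)))"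
proof -
  define X where "X e G = (1 - of_bool (a e)) * Dop G (h e) (conf_upd {e} a)" for e G
  have "Dop F (\<lambda>b. \<Sum>e\<in>E. of_bool (b e) * h e b) a
      = (\<Sum>e\<in>E. of_bool (a e) * Dop F (h e) a + (if e \<in> F then X e (F - {e}) else 0))"
    if "F \<subseteq> E" for F
    using finite_subset[OF that assms]
    by (auto simp: Dop_sum X_def Dop_mult_bond_mem Dop_mult_bond_notin intro!: sum.cong)
  then have "(\<Sum>F\<in>{F. F \<subseteq> E \<and> card F = Suc k}. Dop F (\<lambda>b. \<Sum>e\<in>E. of_bool (b e) * h e b) a)
      = (\<Sum>e\<in>E. of_bool (a e) * (\<Sum>F\<in>{F. F \<subseteq> E \<and> card F = Suc k}. Dop F (h e) a))
        + (\<Sum>e\<in>E. \<Sum>F\<in>{F. F \<subseteq> E \<and> card F = Suc k}. if e \<in> F then X e (F - {e}) else 0)"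
    by (simp add: sum.distrib sum_distrib_left sum.swap[where B = E])
  also have "(\<Sum>e\<in>E. \<Sum>F\<in>{F. F \<subseteq> E \<and> card F = Suc k}. if e \<in> F then X e (F - {e}) else 0)
      = (\<Sum>e\<in>E. \<Sum>G\<in>{G. G \<subseteq> E \<and> card G = k}. X e G)"
    using assms by (intro sum.cong refl sum_card_subsets_through)
      (auto simp: X_def Dop_conf_upd_mem finite_subset)
  also have "\<dots> = (\<Sum>e\<in>E. \<Sum>e'\<in>E. (of_bool (conf_upd {e} a e') - of_bool (a e')) *
              (\<Sum>G\<in>{G. G \<subseteq> E \<and> card G = k}. Dop G (h e') (conf_upd {e} a)))"
    by (intro sum.cong refl, subst sum_conf_upd_single_diff[OF assms])
      (simp_all add: X_def sum_distrib_left)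
  finally show ?thesis .
qed

theorem lemma3p2:
  fixes m k :: nat and \<xi> :: "real ^ ('d::finite)" and a :: "'d conf"
    and v :: "'d conf \<Rightarrow> 'd pt \<Rightarrow> real"
  assumes "m \<ge> 1" and "k \<ge> 1"
    and v_bd: "\<And>b. \<forall>x\<in>bdry (cube m). v b x = lin \<xi> x"
    and v_harm: "\<And>b. \<forall>x\<in>intr (cube m). divag b (v b) x = 0"
  shows "(\<Sum>F\<in>{F. F \<subseteq> edges_in (cube m) \<and> card F = k}. Dop F (energy m \<xi>) a)
   = (1 / real (card (cube m :: 'd pt set))) *
       inner_on (cube m) (grad (lin \<xi>))
         (\<lambda>e'. of_bool (a e') *
            (\<Sum>F\<in>{F. F \<subseteq> edges_in (cube m) \<and> card F = k}.
               Dop F (\<lambda>b. grad (v b) e') a))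
   + (1 / real (card (cube m :: 'd pt set))) *
       (\<Sum>e\<in>edges_in (cube m).
          inner_on (cube m) (grad (lin \<xi>))
            (\<lambda>e'. (of_bool (conf_upd {e} a e') - of_bool (a e')) *
               (\<Sum>G\<in>{G. G \<subseteq> edges_in (cube m) \<and> card G = k - 1}.
                  Dop G (\<lambda>b. grad (v b) e') (conf_upd {e} a))))"
proof -
  obtain j where k: "k = Suc j" using \<open>k \<ge> 1\<close> by (cases k) auto
  define c where "c = 1 / real (card (cube m :: 'd pt set))"
  define h where "h e b = grad (lin \<xi>) e * grad (v b) e" for e b
  have energy: "energy m \<xi> = (\<lambda>b. c * (\<Sum>e\<in>edges_in (cube m). of_bool (b e) * h e b))"
    using energy_eq_cross_term[OF v_bd v_harm] by (simp add: fun_eq_iff c_def h_def)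
  have "(\<Sum>F\<in>{F. F \<subseteq> edges_in (cube m) \<and> card F = k}. Dop F (energy m \<xi>) a)
      = c * (\<Sum>F\<in>{F. F \<subseteq> edges_in (cube m) \<and> card F = Suc j}.
               Dop F (\<lambda>b. \<Sum>e\<in>edges_in (cube m). of_bool (b e) * h e b) a)"
    unfolding energy k Dop_cmult by (rule sum_distrib_left[symmetric])
  also note sum_Dop_bond_weighted_sum[OF finite_edges_in[OF finite_cube]]
  finally show ?thesis
    unfolding inner_on_def h_def c_def k by (simp add: Dop_cmult sum_distrib_left algebra_simps)
qed

end
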